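(* Let $T\ge 2$, let $\mathcal D_1,\dots,\mathcal D_T$ be task distributions, let $f_1,\dots,f_T$ be arbitrary encoders, let $\lambda>0$, and for each $t\in\{2,\dots,T\}$ let $k_{t1},\dots,k_{t,t-1}>0$ with $\sum_{j=1}^{t-1}k_{tj}=1$. Set $\alpha=\frac{2e^2}{1+e^2}$, $\gamma_t(\lambda)=\min\big(\{\tfrac1t\}\cup\{\lambda k_{tj}\}_{j=1}^{t-1}\big)$ and $\gamma'_t(\lambda)=\max\big(\{1\}\cup\{\lambda k_{tj}\}_{j=1}^{t-1}\big)$. Then $$L_{\mathrm{test}}(f_T;\mathcal D_1,\dots,\mathcal D_T)\le \alpha^{T-1}L_{\mathrm{train}}(f_1;\mathcal D_1)+\sum_{t=2}^T\frac{\alpha^{T-t}}{\gamma_t(\lambda)}L_{\mathrm{train}}(f_t;f_{t-1},\mathcal D_t,\mathcal D_{1:t-1})+\eta,$$ $$L_{\mathrm{test}}(f_T;\mathcal D_1,\dots,\mathcal D_T)\ge \alpha^{T-1}L_{\mathrm{train}}(f_1;\mathcal D_1)+\sum_{t=2}^T\frac{\alpha^{T-t}}{\gamma'_t(\lambda)}L_{\mathrm{train}}(f_t;f_{t-1},\mathcal D_t,\mathcal D_{1:t-1})+\eta',$$ where $$\eta=\Big(2-\alpha+\alpha\log\tfrac{\alpha}{2}\Big)\frac{T-1-T\alpha+\alpha^T}{(1-\alpha)^2}+\sum_{t=2}^T\alpha^{T-t}\Big(1-\frac{1}{\gamma_t(\lambda)}\Big)\inf_f L_{\mathrm{con}}(f;\mathcal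 D_t),$$ $$\eta'=-\big(\alpha\log(1+e^2)+\alpha\big)\frac{T-1-T\alpha+\alpha^T}{(1-\alpha)^2},$$ the infimum being over all encoders $f$.
   Context: Let $\mathcal X$ be a measurable input space and $d\ge 1$. An encoder is a measurable map $f:\mathcal X\to\mathbb R^d$ with $\|f(x)\|_2=1$ for all $x$. A task distribution $\mathcal D$ consists of a probability distribution $\mu$ on a countable set of classes together with, for each class $c$, a probability distribution $\mathcal D_c$ on $\mathcal X$. Sampling scheme: $c^+\sim\mu$ and $c^-\sim\mu$ independently; given $c^+$, $x,x^+$ are drawn i.i.d. from $\mathcal D_{c^+}$; given $c^-$, $x^-\sim\mathcal D_{c^-}$ independently. Let $\ell(v)=\log(1+e^{-v})$. The contrastive loss is $L_{\mathrm{con}}(f;\mathcal D)=\mathbb E\big[\ell\big(f(x)^\top(f(x^+)-f(x^-))\big)\big]$. For an encoder $f$ let $\mathbf p(f;x,x^+,x^-)=\mathrm{softmax}\big(f(x)^\top f(x^+),\,f(x)^\top f(x^-)\big)\in\mathbb R^2$. For encoders $g,h$ the distillation loss is $L_{\mathrm{dis}}(g;h,\mathcal D)=\mathbb E\big[-\mathbf p(h;x,x^+,x^-)\cdot\log\mathbf p(g;x,x^+,x^-)\big]$ (logarithm taken componentwise), with the same sampling scheme. For $t\ge2$, the distillation loss on previously seen tasks is $L_{\mathrm{dis}}(f_t;f_{t-1},\mathcal D_{1:t-1}):=\sum_{j=1}^{t-1}k_{tj}\,L_{\mathrm{dis}}(f_t;f_{t-1},\mathcal D_j)$. Training losses: $L_{\mathrm{train}}(f_1;\mathcal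 D_1)=L_{\mathrm{con}}(f_1;\mathcal D_1)$ and, for $t\ge 2$, $L_{\mathrm{train}}(f_t;f_{t-1},\mathcal D_t,\mathcal D_{1:t-1})=L_{\mathrm{con}}(f_t;\mathcal D_t)+\lambda\,L_{\mathrm{dis}}(f_t;f_{t-1},\mathcal D_{1:t-1})$. Test loss: $L_{\mathrm{test}}(f_T;\mathcal D_1,\dots,\mathcal D_T)=\sum_{t=1}^T L_{\mathrm{con}}(f_T;\mathcal D_t)$. *)

theory Defs
  imports "HOL-Probability.Probability"
begin

definition lgl :: "real \<Rightarrow> real" where
  "lgl v = ln (1 + exp (- v))"

definition encoder :: "'x measure \<Rightarrow> ('x \<Rightarrow> real ^ 'd) \<Rightarrow> bool" where
  "encoder M f \<longleftrightarrow> f \<in> borel_measurable M \<and> (\<forall>x\<in>space M. norm (f x) = 1)"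

text \<open>A task distribution: a class distribution mu (on a countable class type)
  together with a class-conditional input distribution D_c for every class c.\<close>
type_synonym ('c, 'x) task = "'c pmf \<times> ('c \<Rightarrow> 'x measure)"

definition task_dist :: "'x measure \<Rightarrow> ('c::countable, 'x) task \<Rightarrow> bool" where
  "task_dist M D \<longleftrightarrow> (\<forall>c. prob_space (snd D c) \<and> sets (snd D c) = sets M)"

text \<open>Expectation under the sampling scheme: c+, c- ~ mu independently,
  x, x+ ~ D_{c+} i.i.d., x- ~ D_{c-}.\<close>
definition samp_exp :: "('c, 'x) task \<Rightarrow> ('x \<Rightarrow> 'x \<Rightarrow> 'x \<Rightarrow> real) \<Rightarrow> real" where
  "samp_exp D F =
     (\<integral>cp. \<integral>cn. \<integral>x. \<integral>xp. \<integral>xn. F x xp xn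
        \<partial>(snd D cn) \<partial>(snd D cp) \<partial>(snd D cp) \<partial>(measure_pmf (fst D)) \<partial>(measure_pmf (fst D)))"

definition L_con :: "('x \<Rightarrow> real ^ 'd) \<Rightarrow> ('c, 'x) task \<Rightarrow> real" where
  "L_con f D = samp_exp D (\<lambda>x xp xn. lgl (f x \<bullet> (f xp - f xn)))"

definition smax1 :: "real \<Rightarrow> real \<Rightarrow> real" where
  "smax1 a b = exp a / (exp a + exp b)"
definition smax2 :: "real \<Rightarrow> real \<Rightarrow> real" where
  "smax2 a b = exp b / (exp a + exp b)"

definition L_dis :: "('x \<Rightarrow> real ^ 'd) \<Rightarrow> ('x \<Rightarrow> real ^ 'd) \<Rightarrow> ('c, 'x) task \<Rightarrow> real" where
  "L_dis g h D = samp_exp D (\<lambda>x xp xn.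
     - (smax1 (h x \<bullet> h xp) (h x \<bullet> h xn) * ln (smax1 (g x \<bullet> g xp) (g x \<bullet> g xn))
      + smax2 (h x \<bullet> h xp) (h x \<bullet> h xn) * ln (smax2 (g x \<bullet> g xp) (g x \<bullet> g xn))))"

text \<open>Training losses (tasks and encoders indexed from 1).\<close>
definition L_train1 :: "('x \<Rightarrow> real ^ 'd) \<Rightarrow> ('c, 'x) task \<Rightarrow> real" where
  "L_train1 f D = L_con f D"

definition L_train ::
  "real \<Rightarrow> (nat \<Rightarrow> nat \<Rightarrow> real) \<Rightarrow> (nat \<Rightarrow> ('c, 'x) task) \<Rightarrow> nat
     \<Rightarrow> ('x \<Rightarrow> real ^ 'd) \<Rightarrow> ('x \<Rightarrow> real ^ 'd) \<Rightarrow> real" where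
  "L_train lam k D t ft fprev =
     L_con ft (D t) + lam * (\<Sum>j = 1..t - 1. k t j * L_dis ft fprev (D j))"

definition L_test :: "('x \<Rightarrow> real ^ 'd) \<Rightarrow> (nat \<Rightarrow> ('c, 'x) task) \<Rightarrow> nat \<Rightarrow> real" where
  "L_test f D T = (\<Sum>t = 1..T. L_con f (D t))"

definition alpha :: real where
  "alpha = 2 * exp 2 / (1 + exp 2)"

definition gam :: "real \<Rightarrow> (nat \<Rightarrow> nat \<Rightarrow> real) \<Rightarrow> nat \<Rightarrow> real" where
  "gam lam k t = Min (insert (1 / real t) ((\<lambda>j. lam * k t j) ` {1..t - 1}))"

definition gam' :: "real \<Rightarrow> (nat \<Rightarrow> nat \<Rightarrow> real) \<Rightarrow> nat \<Rightarrow> real" where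
  "gam' lam k t = Max (insert 1 ((\<lambda>j. lam * k t j) ` {1..t - 1}))"

definition inf_con :: "'x measure \<Rightarrow> ('c, 'x) task \<Rightarrow> ('d::finite) itself \<Rightarrow> real" where
  "inf_con M D _ = (INF f \<in> {f :: 'x \<Rightarrow> real ^ 'd. encoder M f}. L_con f D)"

end

theory Submission
  imports Defs
begin

text \<open>
  Write \<open>z\<close> and \<open>w\<close> for the margins \<open>f\<^sub>t(x)\<bullet>(f\<^sub>t(x\<^sup>+) - f\<^sub>t(x\<^sup>-))\<close> of the new and of the
  previous encoder; both lie in \<open>[-2, 2]\<close> since encoders take unit values. The distillation
  integrand is the cross entropy \<open>u \<l>(z) + (1 - u) \<l>(-z)\<close> with \<open>u = \<sigma>(w)\<close>, and it differs from
  \<open>\<l>(z)\<close> by \<open>(u - 1) z\<close>. The tangent line of \<open>ln\<close> at \<open>\<alpha>/2\<close> bounds this difference by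
  \<open>\<alpha> \<l>(w) + 2 - \<alpha> + \<alpha> ln(\<alpha>/2)\<close>; conversely \<open>1 - u \<le> \<sigma>(2) = \<alpha>/2\<close> and \<open>\<l>(w) \<le> ln(1 + e\<^sup>2)\<close> bound it
  below by \<open>\<alpha> \<l>(w) - \<alpha> ln(1 + e\<^sup>2) - \<alpha>\<close>. Integrated over each of the \<open>t - 1\<close> old tasks, this gives
  \<open>A\<^sub>t \<le> \<alpha> A\<^sub>t\<^sub>-\<^sub>1 + b\<^sub>t\<close> (and the reverse) for \<open>A\<^sub>t = L_test(f\<^sub>t; D\<^sub>1, \<dots>, D\<^sub>t)\<close>, where \<open>b\<^sub>t\<close> is
  expressed through \<open>L_train\<close> by comparing the weights \<open>\<lambda> k\<^sub>t\<^sub>j\<close> with \<open>\<gamma>\<^sub>t\<close> resp. \<open>\<gamma>'\<^sub>t\<close>.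
  Unrolling the recursion from \<open>A\<^sub>1 = L_train(f\<^sub>1)\<close> yields the theorem.
\<close>

section \<open>Bounded integrands of the sampling scheme\<close>

lemma prob_integrable_bounded:
  fixes \<phi> :: "'a \<Rightarrow> real"
  assumes "prob_space N" "sets N = sets M" "\<phi> \<in> borel_measurable M"
    and "\<And>y. y \<in> space M \<Longrightarrow> \<bar>\<phi> y\<bar> \<le> B"
  shows "integrable N \<phi>" and "\<bar>\<integral>y. \<phi> y \<partial>N\<bar> \<le> B"
proof -
  interpret prob_space N by fact
  have space: "space N = space M" using assms(2) by (rule sets_eq_imp_space_eq)
  have "\<phi> \<in> borel_measurable N" using assms(3) by (simp add: measurable_cong_sets[OF assms(2) refl])
  show int: "integrable N \<phi>"
    by (rule integrable_const_bound[where B = B]) (use assms(4) space \<open>\<phi> \<in> borel_measurable N\<close> in auto)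
  have "(\<integral>y. \<phi> y \<partial>N) \<le> B" and "- B \<le> (\<integral>y. \<phi> y \<partial>N)"
    using assms(4) space by (auto intro!: integral_le_const integral_ge_const int AE_I2 simp: abs_le_iff minus_le_iff)
  then show "\<bar>\<integral>y. \<phi> y \<partial>N\<bar> \<le> B" by linarith
qed

lemma pmf_integrable_bounded:
  fixes \<phi> :: "'a \<Rightarrow> real"
  assumes "\<And>c. \<bar>\<phi> c\<bar> \<le> B"
  shows "integrable (measure_pmf p) \<phi>" and "\<bar>\<integral>c. \<phi> c \<partial>measure_pmf p\<bar> \<le> B"
  using prob_integrable_bounded[OF prob_space_measure_pmf refl, where \<phi> = \<phi> and B = B] assms
  by (simp_all add: measurable_pmf_measure1)

lemma bounded_parametric_integral:
  fixes g :: "'k \<Rightarrow> 'a \<Rightarrow> real"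
  assumes "prob_space N" "sets N = sets M" "case_prod g \<in> borel_measurable (K \<Otimes>\<^sub>M M)"
    and "\<And>a y. a \<in> space K \<Longrightarrow> y \<in> space M \<Longrightarrow> \<bar>g a y\<bar> \<le> B"
  shows "(\<lambda>a. \<integral>y. g a y \<partial>N) \<in> borel_measurable K"
    and "\<And>a. a \<in> space K \<Longrightarrow> integrable N (g a)"
    and "\<And>a. a \<in> space K \<Longrightarrow> \<bar>\<integral>y. g a y \<partial>N\<bar> \<le> B"
proof -
  interpret prob_space N by fact
  have "case_prod g \<in> borel_measurable (K \<Otimes>\<^sub>M N)"
    unfolding measurable_cong_sets[OF sets_pair_measure_cong[OF refl assms(2)] refl] by (rule assms(3))
  then show "(\<lambda>a. \<integral>y. g a y \<partial>N) \<in> borel_measurable K"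
    by (rule borel_measurable_lebesgue_integral)
  fix a assume a: "a \<in> space K"
  have "g a \<in> borel_measurable M"
    using measurable_Pair2[OF assms(3) a] by simp
  from prob_integrable_bounded[OF assms(1,2) this, of B] assms(4)[OF a]
  show "integrable N (g a)" and "\<bar>\<integral>y. g a y \<partial>N\<bar> \<le> B" by auto
qed

text \<open>Boundedness makes every level of the iterated integral in \<open>samp_exp\<close> integrable.\<close>
definition bounded_measurable3 :: "'x measure \<Rightarrow> ('x \<Rightarrow> 'x \<Rightarrow> 'x \<Rightarrow> real) \<Rightarrow> bool" where
  "bounded_measurable3 M F \<longleftrightarrow>
     (\<lambda>p. F (fst (fst p)) (snd (fst p)) (snd p)) \<in> borel_measurable ((M \<Otimes>\<^sub>M M) \<Otimes>\<^sub>M M) \<and>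
     (\<exists>B. \<forall>x\<in>space M. \<forall>y\<in>space M. \<forall>z\<in>space M. \<bar>F x y z\<bar> \<le> B)"

lemma task_dist_space: "task_dist M D \<Longrightarrow> space (snd D c) = space M"
  unfolding task_dist_def by (metis sets_eq_imp_space_eq)

lemma samp_exp_integrable:
  assumes td: "task_dist M D" and F: "bounded_measurable3 M F"
  shows "\<And>cn x y. x \<in> space M \<Longrightarrow> y \<in> space M \<Longrightarrow> integrable (snd D cn) (F x y)"
    and "\<And>cn cp x. x \<in> space M \<Longrightarrow> integrable (snd D cp) (\<lambda>y. \<integral>z. F x y z \<partial>snd D cn)"
    and "\<And>cn cp. integrable (snd D cp) (\<lambda>x. \<integral>y. \<integral>z. F x y z \<partial>snd D cn \<partial>snd D cp)"
    and "\<And>cp. integrable (measure_pmf (fst D))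
            (\<lambda>cn. \<integral>x. \<integral>y. \<integral>z. F x y z \<partial>snd D cn \<partial>snd D cp \<partial>snd D cp)"
    and "integrable (measure_pmf (fst D))
            (\<lambda>cp. \<integral>cn. \<integral>x. \<integral>y. \<integral>z. F x y z \<partial>snd D cn \<partial>snd D cp \<partial>snd D cp \<partial>measure_pmf (fst D))"
proof -
  obtain B where B: "\<And>x y z. x \<in> space M \<Longrightarrow> y \<in> space M \<Longrightarrow> z \<in> space M \<Longrightarrow> \<bar>F x y z\<bar> \<le> B"
    using F unfolding bounded_measurable3_def by blast
  have ps: "\<And>c. prob_space (snd D c)" and ss: "\<And>c. sets (snd D c) = sets M"
    using td unfolding task_dist_def by auto
  have "case_prod (\<lambda>p z. F (fst p) (snd p) z) \<in> borel_measurable ((M \<Otimes>\<^sub>M M) \<Otimes>\<^sub>M M)"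
    using F unfolding bounded_measurable3_def by (simp add: case_prod_beta')
  note z_level = bounded_parametric_integral[OF ps ss this, where B = B]
  have z_bound: "\<And>cn x y. x \<in> space M \<Longrightarrow> y \<in> space M \<Longrightarrow> \<bar>\<integral>z. F x y z \<partial>snd D cn\<bar> \<le> B"
    using z_level(3) B by (auto simp: space_pair_measure)
  show "\<And>cn x y. x \<in> space M \<Longrightarrow> y \<in> space M \<Longrightarrow> integrable (snd D cn) (F x y)"
    using z_level(2) B by (force simp: space_pair_measure)
  have "(\<lambda>p. \<integral>z. F (fst p) (snd p) z \<partial>snd D cn) \<in> borel_measurable (M \<Otimes>\<^sub>M M)" for cn
    by (rule z_level(1)) (use B in \<open>auto simp: space_pair_measure\<close>)
  then have "case_prod (\<lambda>x y. \<integral>z. F x y z \<partial>snd D cn) \<in> borel_measurable (M \<Otimes>\<^sub>M M)" for cn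
    by (simp add: case_prod_beta')
  note y_level = bounded_parametric_integral[OF ps ss this, where B = B]
  show "\<And>cn cp x. x \<in> space M \<Longrightarrow> integrable (snd D cp) (\<lambda>y. \<integral>z. F x y z \<partial>snd D cn)"
    using y_level(2) z_bound by blast
  have x_meas: "(\<lambda>x. \<integral>y. \<integral>z. F x y z \<partial>snd D cn \<partial>snd D cp) \<in> borel_measurable M" for cn cp
    using y_level(1) z_bound by blast
  have x_bound: "\<And>x. x \<in> space M \<Longrightarrow> \<bar>\<integral>y. \<integral>z. F x y z \<partial>snd D cn \<partial>snd D cp\<bar> \<le> B" for cn cp
    using y_level(3) z_bound by blast
  show "\<And>cn cp. integrable (snd D cp) (\<lambda>x. \<integral>y. \<integral>z. F x y z \<partial>snd D cn \<partial>snd D cp)"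
    by (rule prob_integrable_bounded(1)[OF ps ss x_meas x_bound])
  have cn_bound: "\<bar>\<integral>x. \<integral>y. \<integral>z. F x y z \<partial>snd D cn \<partial>snd D cp \<partial>snd D cp\<bar> \<le> B" for cn cp
    by (rule prob_integrable_bounded(2)[OF ps ss x_meas x_bound])
  show "\<And>cp. integrable (measure_pmf (fst D))
            (\<lambda>cn. \<integral>x. \<integral>y. \<integral>z. F x y z \<partial>snd D cn \<partial>snd D cp \<partial>snd D cp)"
    by (rule pmf_integrable_bounded(1)) (rule cn_bound)
  have cp_bound: "\<bar>\<integral>cn. \<integral>x. \<integral>y. \<integral>z. F x y z \<partial>snd D cn \<partial>snd D cp \<partial>snd D cp \<partial>measure_pmf (fst D)\<bar> \<le> B"
    for cp by (rule pmf_integrable_bounded(2)) (rule cn_bound)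
  show "integrable (measure_pmf (fst D))
            (\<lambda>cp. \<integral>cn. \<integral>x. \<integral>y. \<integral>z. F x y z \<partial>snd D cn \<partial>snd D cp \<partial>snd D cp \<partial>measure_pmf (fst D))"
    by (rule pmf_integrable_bounded(1)) (rule cp_bound)
qed

lemma samp_exp_mono:
  assumes td: "task_dist M D" and F: "bounded_measurable3 M F" and G: "bounded_measurable3 M G"
    and le: "\<And>x y z. x \<in> space M \<Longrightarrow> y \<in> space M \<Longrightarrow> z \<in> space M \<Longrightarrow> F x y z \<le> G x y z"
  shows "samp_exp D F \<le> samp_exp D G"
proof -
  note IF = samp_exp_integrable[OF td F] and IG = samp_exp_integrable[OF td G]
  note space = task_dist_space[OF td]
  show ?thesis
    unfolding samp_exp_def
    apply (rule integral_mono[OF IF(5) IG(5)])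
    apply (rule integral_mono[OF IF(4) IG(4)])
    apply (rule integral_mono[OF IF(3) IG(3)])
    apply (rule integral_mono[OF IF(2) IG(2)])
    using space apply blast
    using space apply blast
    apply (rule integral_mono[OF IF(1) IG(1)])
    using space le apply blast+
    done
qed

lemma prob_integral_affine:
  fixes g h :: "'a \<Rightarrow> real"
  assumes "prob_space N" "integrable N g" "integrable N h"
    and "\<And>y. y \<in> space N \<Longrightarrow> \<phi> y = a * g y + h y + c"
  shows "(\<integral>y. \<phi> y \<partial>N) = a * (\<integral>y. g y \<partial>N) + (\<integral>y. h y \<partial>N) + c"
proof -
  interpret prob_space N by fact
  have "(\<integral>y. \<phi> y \<partial>N) = (\<integral>y. a * g y + h y + c \<partial>N)"
    by (rule Bochner_Integration.integral_cong) (use assms(4) in auto)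
  also have "\<dots> = (\<integral>y. a * g y + h y \<partial>N) + c"
    using assms(2,3) by (subst Bochner_Integration.integral_add) (auto simp: prob_space)
  also have "\<dots> = a * (\<integral>y. g y \<partial>N) + (\<integral>y. h y \<partial>N) + c"
    using assms(2,3) by (subst Bochner_Integration.integral_add) auto
  finally show ?thesis .
qed

lemma samp_exp_affine:
  assumes td: "task_dist M D" and G: "bounded_measurable3 M G" and H: "bounded_measurable3 M H"
  shows "samp_exp D (\<lambda>x y z. a * G x y z + H x y z + c) = a * samp_exp D G + samp_exp D H + c"
proof -
  note IG = samp_exp_integrable[OF td G] and IH = samp_exp_integrable[OF td H]
  note space = task_dist_space[OF td]
  have ps: "\<And>c. prob_space (snd D c)" using td unfolding task_dist_def by auto
  show ?thesis
    unfolding samp_exp_def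
    apply (rule prob_integral_affine[OF prob_space_measure_pmf IG(5) IH(5)])
    apply (rule prob_integral_affine[OF prob_space_measure_pmf IG(4) IH(4)])
    apply (rule prob_integral_affine[OF ps IG(3) IH(3)])
    apply (rule prob_integral_affine[OF ps IG(2) IH(2)])
    using space apply blast
    using space apply blast
    apply (rule prob_integral_affine[OF ps IG(1) IH(1)])
    using space apply blast+
    done
qed

lemma samp_exp_nonneg: "(\<And>x y z. 0 \<le> F x y z) \<Longrightarrow> 0 \<le> samp_exp D F"
  unfolding samp_exp_def by (intro integral_nonneg_AE AE_I2 allI)

lemma bounded_measurable3_affine:
  assumes G: "bounded_measurable3 M G" and H: "bounded_measurable3 M H"
  shows "bounded_measurable3 M (\<lambda>x y z. a * G x y z + H x y z + c)"
proof -
  have [measurable]: "(\<lambda>p. G (fst (fst p)) (snd (fst p)) (snd p)) \<in> borel_measurable ((M \<Otimes>\<^sub>M M) \<Otimes>\<^sub>M M)"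
    and [measurable]: "(\<lambda>p. H (fst (fst p)) (snd (fst p)) (snd p)) \<in> borel_measurable ((M \<Otimes>\<^sub>M M) \<Otimes>\<^sub>M M)"
    using G H unfolding bounded_measurable3_def by blast+
  obtain BG where BG: "\<forall>x\<in>space M. \<forall>y\<in>space M. \<forall>z\<in>space M. \<bar>G x y z\<bar> \<le> BG"
    using G unfolding bounded_measurable3_def by blast
  obtain BH where BH: "\<forall>x\<in>space M. \<forall>y\<in>space M. \<forall>z\<in>space M. \<bar>H x y z\<bar> \<le> BH"
    using H unfolding bounded_measurable3_def by blast
  have "\<bar>a * G x y z + H x y z + c\<bar> \<le> \<bar>a\<bar> * BG + BH + \<bar>c\<bar>"
    if "x \<in> space M" "y \<in> space M" "z \<in> space M" for x y z
  proof -
    have "\<bar>a * G x y z\<bar> \<le> \<bar>a\<bar> * BG" using BG that by (simp add: abs_mult mult_left_mono)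
    then show ?thesis using BH that by (smt (verit))
  qed
  moreover have "(\<lambda>p. a * G (fst (fst p)) (snd (fst p)) (snd p) + H (fst (fst p)) (snd (fst p)) (snd p) + c)
      \<in> borel_measurable ((M \<Otimes>\<^sub>M M) \<Otimes>\<^sub>M M)"
    by measurable
  ultimately show ?thesis unfolding bounded_measurable3_def by blast
qed

section \<open>The logistic loss and the distillation cross entropy\<close>

definition sigmoid :: "real \<Rightarrow> real" where
  "sigmoid w = 1 / (1 + exp (- w))"

definition xent :: "real \<Rightarrow> real \<Rightarrow> real" where
  "xent u z = u * lgl z + (1 - u) * lgl (- z)"

lemma sigmoid_pos: "0 < sigmoid w"
  unfolding sigmoid_def by (simp add: add_pos_pos)

lemma sigmoid_less_1: "sigmoid w < 1"
  unfolding sigmoid_def by (simp add: divide_simps add_pos_pos)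

lemma sigmoid_mono: "v \<le> w \<Longrightarrow> sigmoid v \<le> sigmoid w"
  unfolding sigmoid_def by (intro divide_left_mono) (auto intro!: mult_pos_pos add_pos_pos)

lemma sigmoid_minus: "sigmoid (- w) = 1 - sigmoid w"
proof -
  have "0 < 1 + exp w" by (simp add: add_pos_pos)
  then show ?thesis unfolding sigmoid_def by (simp add: exp_minus field_simps)
qed

lemma lgl_nonneg: "0 \<le> lgl v"
  unfolding lgl_def by simp

lemma ln_sigmoid: "ln (sigmoid w) = - lgl w"
  unfolding sigmoid_def lgl_def by (simp add: ln_div add_pos_pos)

lemma lgl_diff_minus: "lgl z - lgl (- z) = - z"
proof -
  have "1 + exp (- z) = exp (- z) * (1 + exp z)" by (simp add: algebra_simps exp_minus_inverse)
  then have "ln (1 + exp (- z)) = - z + ln (1 + exp z)"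
    by (simp add: ln_mult_pos add_pos_pos)
  then show ?thesis unfolding lgl_def by simp
qed

lemma lgl_le_of_ge: "- c \<le> v \<Longrightarrow> lgl v \<le> ln (1 + exp c)"
  unfolding lgl_def by (simp add: add_pos_pos)

lemma smax1_eq_sigmoid: "smax1 a b = sigmoid (a - b)"
  unfolding smax1_def sigmoid_def by (simp add: field_simps exp_diff add_pos_pos exp_minus_inverse)

lemma smax2_eq_sigmoid: "smax2 a b = sigmoid (b - a)"
  unfolding smax2_def sigmoid_def by (simp add: field_simps exp_diff add_pos_pos exp_minus_inverse)

lemma softmax_cross_entropy_eq_xent:
  "- (smax1 a b * ln (smax1 c d) + smax2 a b * ln (smax2 c d)) = xent (sigmoid (a - b)) (c - d)"
proof -
  have "smax2 a b = 1 - sigmoid (a - b)" using sigmoid_minus[of "a - b"] by (simp add: smax2_eq_sigmoid)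
  moreover have "ln (smax2 c d) = - lgl (- (c - d))" by (simp add: smax2_eq_sigmoid ln_sigmoid)
  ultimately show ?thesis unfolding xent_def by (simp add: smax1_eq_sigmoid ln_sigmoid)
qed

lemma xent_nonneg: "0 \<le> u \<Longrightarrow> u \<le> 1 \<Longrightarrow> 0 \<le> xent u z"
  unfolding xent_def using lgl_nonneg by simp

lemma lgl_minus_xent: "lgl z - xent u z = (u - 1) * z"
proof -
  have "lgl z - xent u z = (1 - u) * (lgl z - lgl (- z))"
    unfolding xent_def by (simp add: algebra_simps)
  then show ?thesis by (simp add: lgl_diff_minus algebra_simps)
qed

lemma alpha_gt_1: "1 < alpha"
  unfolding alpha_def by (simp add: less_divide_eq add_pos_pos)

lemma alpha_half_eq_sigmoid: "alpha / 2 = sigmoid 2"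
proof -
  have "0 < 1 + exp (2::real)" by (simp add: add_pos_pos)
  then show ?thesis unfolding alpha_def sigmoid_def by (simp add: exp_minus field_simps)
qed

lemma lgl_le_distill:
  assumes a: "0 < a" and z: "- 2 \<le> z"
  shows "lgl z \<le> a * lgl w + xent (sigmoid w) z + (2 - a + a * ln (a / 2))"
proof -
  define u where "u = sigmoid w"
  have u: "0 < u" "u < 1" unfolding u_def by (rule sigmoid_pos, rule sigmoid_less_1)
  have "(1 - u) * - z \<le> (1 - u) * 2" using z u by (intro mult_left_mono) auto
  then have "lgl z - xent u z \<le> 2 - 2 * u" by (simp add: lgl_minus_xent algebra_simps)
  \<comment> \<open>the tangent line of \<open>ln\<close> at \<open>a / 2\<close>\<close>
  have "ln (u / (a / 2)) \<le> u / (a / 2) - 1"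
    by (rule ln_le_minus_one) (use u a in simp)
  then have "ln u - ln (a / 2) \<le> 2 * u / a - 1"
    using u a by (simp add: ln_div ln_mult_pos mult.commute[of u 2])
  then have "a * (ln u - ln (a / 2)) \<le> a * (2 * u / a - 1)"
    using a by (intro mult_left_mono) auto
  then have "2 - 2 * u \<le> a * lgl w + (2 - a + a * ln (a / 2))"
    using a by (simp add: u_def ln_sigmoid algebra_simps)
  with \<open>lgl z - xent u z \<le> 2 - 2 * u\<close> show ?thesis unfolding u_def by linarith
qed

lemma lgl_ge_distill:
  assumes z: "z \<le> 2" and w: "- 2 \<le> w"
  shows "alpha * lgl w + xent (sigmoid w) z - (alpha * ln (1 + exp 2) + alpha) \<le> lgl z"
proof -
  define u where "u = sigmoid w"
  have "u < 1" unfolding u_def by (rule sigmoid_less_1)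
  have "1 - u \<le> alpha / 2"
    using sigmoid_mono[of "- w" 2] w unfolding u_def alpha_half_eq_sigmoid sigmoid_minus by simp
  moreover have "(1 - u) * z \<le> (1 - u) * 2" using z \<open>u < 1\<close> by (intro mult_left_mono) auto
  ultimately have "- alpha \<le> lgl z - xent u z" by (simp add: lgl_minus_xent algebra_simps)
  moreover have "alpha * lgl w \<le> alpha * ln (1 + exp 2)"
    using lgl_le_of_ge[OF w] alpha_gt_1 by simp
  ultimately show ?thesis unfolding u_def by linarith
qed

section \<open>Contrastive and distillation losses of one task\<close>

definition margin :: "('x \<Rightarrow> real ^ 'd) \<Rightarrow> 'x \<Rightarrow> 'x \<Rightarrow> 'x \<Rightarrow> real" where
  "margin g x y z = g x \<bullet> (g y - g z)"

definition con_integrand :: "('x \<Rightarrow> real ^ 'd) \<Rightarrow> 'x \<Rightarrow> 'x \<Rightarrow> 'x \<Rightarrow> real" where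
  "con_integrand g x y z = lgl (margin g x y z)"

definition dis_integrand :: "('x \<Rightarrow> real ^ 'd) \<Rightarrow> ('x \<Rightarrow> real ^ 'd) \<Rightarrow> 'x \<Rightarrow> 'x \<Rightarrow> 'x \<Rightarrow> real" where
  "dis_integrand g h x y z = xent (sigmoid (margin h x y z)) (margin g x y z)"

lemma L_con_eq_samp_exp: "L_con g D = samp_exp D (con_integrand g)"
  unfolding L_con_def con_integrand_def margin_def ..

lemma L_dis_eq_samp_exp: "L_dis g h D = samp_exp D (dis_integrand g h)"
  unfolding L_dis_def dis_integrand_def margin_def
  by (simp only: softmax_cross_entropy_eq_xent inner_diff_right)

lemma abs_margin_le:
  assumes "encoder M g" "x \<in> space M" "y \<in> space M" "z \<in> space M"
  shows "\<bar>margin g x y z\<bar> \<le> 2"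
proof -
  have "\<And>v. v \<in> space M \<Longrightarrow> norm (g v) = 1" using assms(1) unfolding encoder_def by auto
  moreover have "\<bar>g x \<bullet> g y\<bar> \<le> norm (g x) * norm (g y)" and "\<bar>g x \<bullet> g z\<bar> \<le> norm (g x) * norm (g z)"
    by (rule Cauchy_Schwarz_ineq2)+
  ultimately show ?thesis using assms unfolding margin_def by (simp add: inner_diff_right)
qed

lemma margin_measurable:
  assumes "encoder M g"
  shows "(\<lambda>p. margin g (fst (fst p)) (snd (fst p)) (snd p)) \<in> borel_measurable ((M \<Otimes>\<^sub>M M) \<Otimes>\<^sub>M M)"
proof -
  have [measurable]: "g \<in> borel_measurable M" using assms unfolding encoder_def by auto
  show ?thesis unfolding margin_def by measurable
qed

lemma lgl_measurable [measurable]: "lgl \<in> borel_measurable borel"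
  unfolding lgl_def[abs_def] by measurable

lemma sigmoid_measurable [measurable]: "sigmoid \<in> borel_measurable borel"
  unfolding sigmoid_def[abs_def] by measurable

lemma bounded_measurable3_con_integrand:
  assumes "encoder M g"
  shows "bounded_measurable3 M (con_integrand g)"
proof -
  note [measurable] = margin_measurable[OF assms]
  have "(\<lambda>p. con_integrand g (fst (fst p)) (snd (fst p)) (snd p)) \<in> borel_measurable ((M \<Otimes>\<^sub>M M) \<Otimes>\<^sub>M M)"
    unfolding con_integrand_def xent_def by measurable
  moreover have "\<bar>con_integrand g x y z\<bar> \<le> ln (1 + exp 2)"
    if "x \<in> space M" "y \<in> space M" "z \<in> space M" for x y z
    using abs_margin_le[OF assms that] lgl_le_of_ge[of 2] lgl_nonneg
    unfolding con_integrand_def by (simp add: abs_le_iff)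
  ultimately show ?thesis unfolding bounded_measurable3_def by blast
qed

lemma bounded_measurable3_dis_integrand:
  assumes g: "encoder M g" and h: "encoder M h"
  shows "bounded_measurable3 M (dis_integrand g h)"
proof -
  note [measurable] = margin_measurable[OF g] margin_measurable[OF h]
  have "(\<lambda>p. dis_integrand g h (fst (fst p)) (snd (fst p)) (snd p)) \<in> borel_measurable ((M \<Otimes>\<^sub>M M) \<Otimes>\<^sub>M M)"
    unfolding dis_integrand_def xent_def by measurable
  moreover have "\<bar>dis_integrand g h x y z\<bar> \<le> ln (1 + exp 2)"
    if xyz: "x \<in> space M" "y \<in> space M" "z \<in> space M" for x y z
  proof -
    define s where "s = sigmoid (margin h x y z)"
    define m where "m = margin g x y z"
    have s: "0 \<le> s" "s \<le> 1" unfolding s_def using sigmoid_pos sigmoid_less_1 less_imp_le by blast+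
    have "\<bar>m\<bar> \<le> 2" unfolding m_def by (rule abs_margin_le[OF g xyz])
    then have "lgl m \<le> ln (1 + exp 2)" and "lgl (- m) \<le> ln (1 + exp 2)"
      by (auto intro: lgl_le_of_ge)
    then have "s * lgl m + (1 - s) * lgl (- m) \<le> s * ln (1 + exp 2) + (1 - s) * ln (1 + exp 2)"
      using s by (intro add_mono mult_left_mono) auto
    then show ?thesis
      using xent_nonneg[OF s, of m] unfolding dis_integrand_def s_def[symmetric] m_def[symmetric] xent_def
      by (simp add: algebra_simps)
  qed
  ultimately show ?thesis unfolding bounded_measurable3_def by blast
qed

lemma L_con_nonneg: "0 \<le> L_con g D"
  unfolding L_con_eq_samp_exp con_integrand_def by (rule samp_exp_nonneg) (rule lgl_nonneg)

lemma L_dis_nonneg: "0 \<le> L_dis g h D"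
  unfolding L_dis_eq_samp_exp dis_integrand_def
  by (rule samp_exp_nonneg, rule xent_nonneg) (use sigmoid_pos sigmoid_less_1 less_imp_le in blast)+

lemma inf_con_le_L_con:
  fixes g :: "'x \<Rightarrow> real ^ 'd"
  assumes "encoder M g"
  shows "inf_con M D TYPE('d) \<le> L_con g D"
  unfolding inf_con_def using assms
  by (intro cINF_lower bdd_belowI[where m = 0]) (auto intro: L_con_nonneg)

lemma L_con_le_distill:
  assumes D: "task_dist M D" and g: "encoder M g" and h: "encoder M h"
  shows "L_con g D \<le> alpha * L_con h D + L_dis g h D + (2 - alpha + alpha * ln (alpha / 2))"
proof -
  note con_h = bounded_measurable3_con_integrand[OF h] and dis = bounded_measurable3_dis_integrand[OF g h]
  have "samp_exp D (con_integrand g)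
      \<le> samp_exp D (\<lambda>x y z. alpha * con_integrand h x y z + dis_integrand g h x y z + (2 - alpha + alpha * ln (alpha / 2)))"
  proof (rule samp_exp_mono[OF D bounded_measurable3_con_integrand[OF g] bounded_measurable3_affine[OF con_h dis]])
    fix x y z assume "x \<in> space M" "y \<in> space M" "z \<in> space M"
    then have "- 2 \<le> margin g x y z" using abs_margin_le[OF g] by fastforce
    then show "con_integrand g x y z
        \<le> alpha * con_integrand h x y z + dis_integrand g h x y z + (2 - alpha + alpha * ln (alpha / 2))"
      unfolding con_integrand_def dis_integrand_def using alpha_gt_1 by (intro lgl_le_distill) auto
  qed
  then show ?thesis
    unfolding L_con_eq_samp_exp L_dis_eq_samp_exp samp_exp_affine[OF D con_h dis] .
qed

lemma L_con_ge_distill: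
  assumes D: "task_dist M D" and g: "encoder M g" and h: "encoder M h"
  shows "alpha * L_con h D + L_dis g h D - (alpha * ln (1 + exp 2) + alpha) \<le> L_con g D"
proof -
  note con_h = bounded_measurable3_con_integrand[OF h] and dis = bounded_measurable3_dis_integrand[OF g h]
  have "samp_exp D (\<lambda>x y z. alpha * con_integrand h x y z + dis_integrand g h x y z + - (alpha * ln (1 + exp 2) + alpha))
      \<le> samp_exp D (con_integrand g)"
  proof (rule samp_exp_mono[OF D bounded_measurable3_affine[OF con_h dis] bounded_measurable3_con_integrand[OF g]])
    fix x y z assume xyz: "x \<in> space M" "y \<in> space M" "z \<in> space M"
    have "margin g x y z \<le> 2" and "- 2 \<le> margin h x y z"
      using abs_margin_le[OF g xyz] abs_margin_le[OF h xyz] by auto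
    then show "alpha * con_integrand h x y z + dis_integrand g h x y z + - (alpha * ln (1 + exp 2) + alpha)
        \<le> con_integrand g x y z"
      unfolding con_integrand_def dis_integrand_def
      using lgl_ge_distill[of "margin g x y z" "margin h x y z"] by linarith
  qed
  then show ?thesis
    unfolding L_con_eq_samp_exp L_dis_eq_samp_exp samp_exp_affine[OF D con_h dis] by simp
qed

section \<open>One step of continual training\<close>

lemma gam_bounds:
  assumes t: "1 \<le> t" and lam: "0 < lam" and k: "\<And>j. j \<in> {1..t - 1} \<Longrightarrow> 0 < k t j"
  shows "0 < gam lam k t" and "gam lam k t \<le> 1" and "\<And>j. j \<in> {1..t - 1} \<Longrightarrow> gam lam k t \<le> lam * k t j"
proof -
  let ?S = "insert (1 / real t) ((\<lambda>j. lam * k t j) ` {1..t - 1})"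
  have "gam lam k t \<in> ?S" unfolding gam_def by (rule Min_in) auto
  moreover have "\<forall>s\<in>?S. 0 < s" using t lam k by auto
  ultimately show "0 < gam lam k t" by blast
  have "gam lam k t \<le> 1 / real t" unfolding gam_def by (rule Min_le) auto
  also have "\<dots> \<le> 1" using t by simp
  finally show "gam lam k t \<le> 1" .
  show "\<And>j. j \<in> {1..t - 1} \<Longrightarrow> gam lam k t \<le> lam * k t j"
    unfolding gam_def by (rule Min_le) auto
qed

lemma gam'_bounds:
  shows "1 \<le> gam' lam k t" and "\<And>j. j \<in> {1..t - 1} \<Longrightarrow> lam * k t j \<le> gam' lam k t"
  unfolding gam'_def by (rule Max_ge; auto)+

lemma sum_le_weighted_sum_divide:
  fixes x w :: "'a \<Rightarrow> real"
  assumes "0 < c" and "\<And>j. j \<in> J \<Longrightarrow> c \<le> w j" and "\<And>j. j \<in> J \<Longrightarrow> 0 \<le> x j"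
  shows "(\<Sum>j\<in>J. x j) \<le> (\<Sum>j\<in>J. w j * x j) / c"
  unfolding sum_divide_distrib
proof (rule sum_mono)
  fix j assume "j \<in> J"
  then have "c * x j \<le> w j * x j" using assms by (intro mult_right_mono) auto
  then show "x j \<le> w j * x j / c" using assms(1) by (simp add: le_divide_eq mult.commute)
qed

lemma weighted_sum_divide_le_sum:
  fixes x w :: "'a \<Rightarrow> real"
  assumes "0 < c" and "\<And>j. j \<in> J \<Longrightarrow> w j \<le> c" and "\<And>j. j \<in> J \<Longrightarrow> 0 \<le> x j"
  shows "(\<Sum>j\<in>J. w j * x j) / c \<le> (\<Sum>j\<in>J. x j)"
  unfolding sum_divide_distrib
proof (rule sum_mono)
  fix j assume "j \<in> J"
  then have "w j * x j \<le> c * x j" using assms by (intro mult_right_mono) auto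
  then show "w j * x j / c \<le> x j" using assms(1) by (simp add: divide_le_eq mult.commute)
qed

lemma L_train_eq:
  "L_train lam k D t g h = L_con g (D t) + (\<Sum>j = 1..t - 1. lam * k t j * L_dis g h (D j))"
  unfolding L_train_def sum_distrib_left by (simp add: mult.assoc)

lemma L_test_split_last:
  "1 \<le> t \<Longrightarrow> L_test g D t = (\<Sum>j = 1..t - 1. L_con g (D j)) + L_con g (D t)"
  unfolding L_test_def by (cases t) (simp_all add: sum.cl_ivl_Suc)

lemma L_test_le_step:
  fixes g h :: "'x \<Rightarrow> real ^ 'd"
  assumes t: "2 \<le> t" and tasks: "\<And>j. j \<in> {1..t} \<Longrightarrow> task_dist M (D j)"
    and g: "encoder M g" and h: "encoder M h"
    and lam: "0 < lam" and k: "\<And>j. j \<in> {1..t - 1} \<Longrightarrow> 0 < k t j"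
  shows "L_test g D t \<le> alpha * L_test h D (t - 1)
           + (L_train lam k D t g h / gam lam k t + (1 - 1 / gam lam k t) * inf_con M (D t) TYPE('d))
           + (2 - alpha + alpha * ln (alpha / 2)) * (real t - 1)"
proof -
  define \<gamma> where "\<gamma> = gam lam k t"
  define c where "c = 2 - alpha + alpha * ln (alpha / 2)"
  have \<gamma>: "0 < \<gamma>" "\<gamma> \<le> 1" "\<And>j. j \<in> {1..t - 1} \<Longrightarrow> \<gamma> \<le> lam * k t j"
    unfolding \<gamma>_def using gam_bounds[where t = t and lam = lam and k = k] t lam k by auto
  have "(\<Sum>j = 1..t - 1. L_con g (D j)) \<le> (\<Sum>j = 1..t - 1. alpha * L_con h (D j) + L_dis g h (D j) + c)"
    unfolding c_def by (intro sum_mono L_con_le_distill[OF tasks g h]) auto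
  also have "\<dots> = alpha * L_test h D (t - 1) + (\<Sum>j = 1..t - 1. L_dis g h (D j)) + c * (real t - 1)"
    using t by (simp add: L_test_def sum.distrib sum_distrib_left of_nat_diff)
  also have "(\<Sum>j = 1..t - 1. L_dis g h (D j)) \<le> (\<Sum>j = 1..t - 1. lam * k t j * L_dis g h (D j)) / \<gamma>"
    using \<gamma> t by (intro sum_le_weighted_sum_divide L_dis_nonneg) auto
  finally have previous: "(\<Sum>j = 1..t - 1. L_con g (D j))
      \<le> alpha * L_test h D (t - 1) + (\<Sum>j = 1..t - 1. lam * k t j * L_dis g h (D j)) / \<gamma> + c * (real t - 1)"
    by simp
  have "inf_con M (D t) TYPE('d) \<le> L_con g (D t)" by (rule inf_con_le_L_con[OF g])
  then have "0 \<le> (1 / \<gamma> - 1) * (L_con g (D t) - inf_con M (D t) TYPE('d))"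
    using \<gamma> t by (intro mult_nonneg_nonneg) (auto simp: field_simps)
  then have current: "L_con g (D t) \<le> L_con g (D t) / \<gamma> + (1 - 1 / \<gamma>) * inf_con M (D t) TYPE('d)"
    by (simp add: algebra_simps)
  show ?thesis
    using previous current L_test_split_last[of t g D] t
    unfolding L_train_eq \<gamma>_def[symmetric] c_def[symmetric] add_divide_distrib by linarith
qed

lemma L_test_ge_step:
  fixes g h :: "'x \<Rightarrow> real ^ 'd"
  assumes t: "2 \<le> t" and tasks: "\<And>j. j \<in> {1..t} \<Longrightarrow> task_dist M (D j)"
    and g: "encoder M g" and h: "encoder M h"
  shows "alpha * L_test h D (t - 1) + L_train lam k D t g h / gam' lam k t
           - (alpha * ln (1 + exp 2) + alpha) * (real t - 1) \<le> L_test g D t"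
proof -
  define \<gamma> where "\<gamma> = gam' lam k t"
  define c where "c = alpha * ln (1 + exp 2) + alpha"
  note \<gamma> = gam'_bounds[where lam = lam and k = k and t = t, folded \<gamma>_def]
  have "(\<Sum>j = 1..t - 1. lam * k t j * L_dis g h (D j)) / \<gamma> \<le> (\<Sum>j = 1..t - 1. L_dis g h (D j))"
    using \<gamma> by (intro weighted_sum_divide_le_sum L_dis_nonneg) auto
  then have "alpha * L_test h D (t - 1) + (\<Sum>j = 1..t - 1. lam * k t j * L_dis g h (D j)) / \<gamma> - c * (real t - 1)
      \<le> (\<Sum>j = 1..t - 1. alpha * L_con h (D j) + L_dis g h (D j) - c)"
    using t by (simp add: L_test_def sum.distrib sum_subtractf sum_distrib_left of_nat_diff)
  also have "\<dots> \<le> (\<Sum>j = 1..t - 1. L_con g (D j))"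
    unfolding c_def by (intro sum_mono L_con_ge_distill[OF tasks g h]) auto
  finally have previous: "alpha * L_test h D (t - 1) + (\<Sum>j = 1..t - 1. lam * k t j * L_dis g h (D j)) / \<gamma>
      - c * (real t - 1) \<le> (\<Sum>j = 1..t - 1. L_con g (D j))" .
  have current: "L_con g (D t) / \<gamma> \<le> L_con g (D t)"
    using \<gamma>(1) L_con_nonneg[of g "D t"] by (simp add: divide_le_eq mult_le_cancel_left1)
  show ?thesis
    using previous current L_test_split_last[of t g D] t
    unfolding L_train_eq \<gamma>_def[symmetric] c_def[symmetric] add_divide_distrib by linarith
qed

section \<open>Unrolling the recursion\<close>

lemma recurrence_le_unrolled:
  fixes A b :: "nat \<Rightarrow> real"
  assumes a: "0 \<le> a" and n: "1 \<le> n"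
    and step: "\<And>m. 2 \<le> m \<Longrightarrow> m \<le> n \<Longrightarrow> A m \<le> a * A (m - 1) + b m"
  shows "A n \<le> a ^ (n - 1) * A 1 + (\<Sum>t = 2..n. a ^ (n - t) * b t)"
  using n step
proof (induction n rule: nat_induct_at_least)
  case base
  then show ?case by simp
next
  case (Suc n)
  have "A (Suc n) \<le> a * A n + b (Suc n)" using Suc.prems[of "Suc n"] Suc.hyps by simp
  also have "\<dots> \<le> a * (a ^ (n - 1) * A 1 + (\<Sum>t = 2..n. a ^ (n - t) * b t)) + b (Suc n)"
    using Suc a by (simp add: mult_left_mono)
  also have "\<dots> = a ^ n * A 1 + (\<Sum>t = 2..n. a ^ (Suc n - t) * b t) + b (Suc n)"
  proof -
    have "a * a ^ (n - 1) = a ^ n" using Suc.hyps by (simp flip: power_Suc)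
    moreover have "a * (\<Sum>t = 2..n. a ^ (n - t) * b t) = (\<Sum>t = 2..n. a ^ (Suc n - t) * b t)"
      unfolding sum_distrib_left by (rule sum.cong) (auto simp: Suc_diff_le)
    ultimately show ?thesis by (simp add: distrib_left mult.assoc[symmetric])
  qed
  also have "\<dots> = a ^ (Suc n - 1) * A 1 + (\<Sum>t = 2..Suc n. a ^ (Suc n - t) * b t)"
    using Suc.hyps by (simp add: sum.cl_ivl_Suc)
  finally show ?case .
qed


lemma recurrence_ge_unrolled:
  fixes A b :: "nat \<Rightarrow> real"
  assumes a: "0 \<le> a" and n: "1 \<le> n"
    and step: "\<And>m. 2 \<le> m \<Longrightarrow> m \<le> n \<Longrightarrow> a * A (m - 1) + b m \<le> A m"
  shows "a ^ (n - 1) * A 1 + (\<Sum>t = 2..n. a ^ (n - t) * b t) \<le> A n"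
proof -
  have "- A n \<le> a ^ (n - 1) * - A 1 + (\<Sum>t = 2..n. a ^ (n - t) * - b t)"
    by (rule recurrence_le_unrolled[OF a n, of "\<lambda>m. - A m"]) (use step in force)
  then show ?thesis by (simp add: sum_negf)
qed

lemma sum_power_times_index:
  fixes a :: real
  assumes a: "a \<noteq> 1" and n: "1 \<le> n"
  shows "(\<Sum>t = 2..n. a ^ (n - t) * (real t - 1)) = (real n - 1 - real n * a + a ^ n) / (1 - a)\<^sup>2"
  using n
proof (induction n rule: nat_induct_at_least)
  case base
  then show ?case by simp
next
  case (Suc n)
  have "(1 - a)\<^sup>2 \<noteq> 0" using a by simp
  have "a * (\<Sum>t = 2..n. a ^ (n - t) * (real t - 1)) = (\<Sum>t = 2..n. a ^ (Suc n - t) * (real t - 1))"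
    unfolding sum_distrib_left by (rule sum.cong) (auto simp: Suc_diff_le)
  then have "(\<Sum>t = 2..Suc n. a ^ (Suc n - t) * (real t - 1))
      = a * (\<Sum>t = 2..n. a ^ (n - t) * (real t - 1)) + real n"
    using Suc.hyps by (simp add: sum.cl_ivl_Suc)
  also have "\<dots> = (real (Suc n) - 1 - real (Suc n) * a + a ^ Suc n) / (1 - a)\<^sup>2"
    unfolding Suc.IH using \<open>(1 - a)\<^sup>2 \<noteq> 0\<close> by (simp add: field_simps power2_eq_square)
  finally show ?case .
qed

lemma sum_power_times_affine:
  fixes a c :: real
  assumes "a \<noteq> 1" "1 \<le> n"
  shows "(\<Sum>t = 2..n. a ^ (n - t) * (b t + c * (real t - 1)))
           = (\<Sum>t = 2..n. a ^ (n - t) * b t) + c * ((real n - 1 - real n * a + a ^ n) / (1 - a)\<^sup>2)"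
proof -
  have "(\<Sum>t = 2..n. a ^ (n - t) * (b t + c * (real t - 1)))
      = (\<Sum>t = 2..n. a ^ (n - t) * b t) + c * (\<Sum>t = 2..n. a ^ (n - t) * (real t - 1))"
    by (simp add: distrib_left sum.distrib sum_distrib_left mult.left_commute)
  then show ?thesis unfolding sum_power_times_index[OF assms] .
qed

lemma affine_recurrence_le:
  fixes A b :: "nat \<Rightarrow> real"
  assumes "0 \<le> a" "a \<noteq> 1" "1 \<le> n"
    and "\<And>m. 2 \<le> m \<Longrightarrow> m \<le> n \<Longrightarrow> A m \<le> a * A (m - 1) + b m + c * (real m - 1)"
  shows "A n \<le> a ^ (n - 1) * A 1 + (\<Sum>t = 2..n. a ^ (n - t) * b t)
           + c * ((real n - 1 - real n * a + a ^ n) / (1 - a)\<^sup>2)"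
proof -
  have "A n \<le> a ^ (n - 1) * A 1 + (\<Sum>t = 2..n. a ^ (n - t) * (b t + c * (real t - 1)))"
    by (rule recurrence_le_unrolled[OF assms(1,3)]) (use assms(4) in \<open>simp add: add.assoc\<close>)
  then show ?thesis unfolding sum_power_times_affine[OF assms(2,3)] by simp
qed

lemma affine_recurrence_ge:
  fixes A b :: "nat \<Rightarrow> real"
  assumes "0 \<le> a" "a \<noteq> 1" "1 \<le> n"
    and "\<And>m. 2 \<le> m \<Longrightarrow> m \<le> n \<Longrightarrow> a * A (m - 1) + b m + c * (real m - 1) \<le> A m"
  shows "a ^ (n - 1) * A 1 + (\<Sum>t = 2..n. a ^ (n - t) * b t)
           + c * ((real n - 1 - real n * a + a ^ n) / (1 - a)\<^sup>2) \<le> A n"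
proof -
  have "a ^ (n - 1) * A 1 + (\<Sum>t = 2..n. a ^ (n - t) * (b t + c * (real t - 1))) \<le> A n"
    by (rule recurrence_ge_unrolled[OF assms(1,3)]) (use assms(4) in \<open>simp add: add.assoc\<close>)
  then show ?thesis unfolding sum_power_times_affine[OF assms(2,3)] by simp
qed

lemma L_test_le_unrolled:
  fixes f :: "nat \<Rightarrow> 'x \<Rightarrow> real ^ 'd"
  assumes T: "2 \<le> T"
    and tasks: "\<And>t. t \<in> {1..T} \<Longrightarrow> task_dist M (D t)"
    and encs: "\<And>t. t \<in> {1..T} \<Longrightarrow> encoder M (f t)"
    and lam: "0 < lam"
    and k: "\<And>t j. t \<in> {2..T} \<Longrightarrow> j \<in> {1..t - 1} \<Longrightarrow> 0 < k t j"
  shows "L_test (f T) D T \<le> alpha ^ (T - 1) * L_con (f 1) (D 1)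
           + (\<Sum>t = 2..T. alpha ^ (T - t) / gam lam k t * L_train lam k D t (f t) (f (t - 1)))
           + ((2 - alpha + alpha * ln (alpha / 2))
                * ((real T - 1 - real T * alpha + alpha ^ T) / (1 - alpha)\<^sup>2)
              + (\<Sum>t = 2..T. alpha ^ (T - t) * (1 - 1 / gam lam k t) * inf_con M (D t) TYPE('d)))"
proof -
  define L where "L t = L_train lam k D t (f t) (f (t - 1))" for t
  define I where "I t = inf_con M (D t) TYPE('d)" for t
  have alpha: "0 \<le> alpha" "alpha \<noteq> 1" and "1 \<le> T" using alpha_gt_1 T by auto
  have "L_test (f n) D n \<le> alpha * L_test (f (n - 1)) D (n - 1)
      + (L n / gam lam k n + (1 - 1 / gam lam k n) * I n)
      + (2 - alpha + alpha * ln (alpha / 2)) * (real n - 1)" if n: "2 \<le> n" "n \<le> T" for n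
    unfolding L_def I_def
  proof (rule L_test_le_step[OF n(1) _ _ _ lam])
    show "\<And>j. j \<in> {1..n} \<Longrightarrow> task_dist M (D j)" using n by (intro tasks) auto
    show "encoder M (f n)" "encoder M (f (n - 1))" using n by (intro encs; auto)+
    show "\<And>j. j \<in> {1..n - 1} \<Longrightarrow> 0 < k n j" using n by (intro k) auto
  qed
  from affine_recurrence_le[OF alpha \<open>1 \<le> T\<close> this]
  have "L_test (f T) D T \<le> alpha ^ (T - 1) * L_test (f 1) D 1
      + (\<Sum>t = 2..T. alpha ^ (T - t) * (L t / gam lam k t + (1 - 1 / gam lam k t) * I t))
      + (2 - alpha + alpha * ln (alpha / 2)) * ((real T - 1 - real T * alpha + alpha ^ T) / (1 - alpha)\<^sup>2)" .
  moreover have "(\<Sum>t = 2..T. alpha ^ (T - t) * (L t / gam lam k t + (1 - 1 / gam lam k t) * I t))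
      = (\<Sum>t = 2..T. alpha ^ (T - t) / gam lam k t * L t) + (\<Sum>t = 2..T. alpha ^ (T - t) * (1 - 1 / gam lam k t) * I t)"
    unfolding sum.distrib[symmetric] by (rule sum.cong) (simp_all add: distrib_left mult.assoc)
  ultimately show ?thesis unfolding L_def I_def L_test_def by simp
qed

lemma L_test_ge_unrolled:
  fixes f :: "nat \<Rightarrow> 'x \<Rightarrow> real ^ 'd"
  assumes T: "2 \<le> T"
    and tasks: "\<And>t. t \<in> {1..T} \<Longrightarrow> task_dist M (D t)"
    and encs: "\<And>t. t \<in> {1..T} \<Longrightarrow> encoder M (f t)"
  shows "alpha ^ (T - 1) * L_con (f 1) (D 1)
           + (\<Sum>t = 2..T. alpha ^ (T - t) / gam' lam k t * L_train lam k D t (f t) (f (t - 1)))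
           + - (alpha * ln (1 + exp 2) + alpha) * ((real T - 1 - real T * alpha + alpha ^ T) / (1 - alpha)\<^sup>2)
         \<le> L_test (f T) D T"
proof -
  define L where "L t = L_train lam k D t (f t) (f (t - 1))" for t
  have alpha: "0 \<le> alpha" "alpha \<noteq> 1" and "1 \<le> T" using alpha_gt_1 T by auto
  have "alpha * L_test (f (n - 1)) D (n - 1) + L n / gam' lam k n
      + - (alpha * ln (1 + exp 2) + alpha) * (real n - 1) \<le> L_test (f n) D n"
    if n: "2 \<le> n" "n \<le> T" for n
  proof -
    have "alpha * L_test (f (n - 1)) D (n - 1) + L n / gam' lam k n
        - (alpha * ln (1 + exp 2) + alpha) * (real n - 1) \<le> L_test (f n) D n"
      unfolding L_def
    proof (rule L_test_ge_step[OF n(1)])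
      show "\<And>j. j \<in> {1..n} \<Longrightarrow> task_dist M (D j)" using n by (intro tasks) auto
      show "encoder M (f n)" "encoder M (f (n - 1))" using n by (intro encs; auto)+
    qed
    then show ?thesis unfolding minus_mult_left by linarith
  qed
  from affine_recurrence_ge[OF alpha \<open>1 \<le> T\<close> this]
  show ?thesis unfolding L_def L_test_def by (simp add: mult.commute)
qed

theorem theorem1:
  fixes M :: "'x measure"
    and D :: "nat \<Rightarrow> ('c::countable, 'x) task"
    and f :: "nat \<Rightarrow> ('x \<Rightarrow> real ^ 'd)"
    and lam :: real
    and k :: "nat \<Rightarrow> nat \<Rightarrow> real"
    and T :: nat
  assumes T2: "T \<ge> 2"
    and tasks: "\<And>t. t \<in> {1..T} \<Longrightarrow> task_dist M (D t)"
    and encs: "\<And>t. t \<in> {1..T} \<Longrightarrow> encoder M (f t)"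
    and lam_pos: "lam > 0"
    and k_pos: "\<And>t j. t \<in> {2..T} \<Longrightarrow> j \<in> {1..t - 1} \<Longrightarrow> k t j > 0"
    and k_sum: "\<And>t. t \<in> {2..T} \<Longrightarrow> (\<Sum>j = 1..t - 1. k t j) = 1"
  defines "\<eta> \<equiv> (2 - alpha + alpha * ln (alpha / 2))
                  * ((real T - 1 - real T * alpha + alpha ^ T) / (1 - alpha)\<^sup>2)
               + (\<Sum>t = 2..T. alpha ^ (T - t) * (1 - 1 / gam lam k t)
                               * inf_con M (D t) TYPE('d))"
    and "\<eta>' \<equiv> - (alpha * ln (1 + exp 2) + alpha)
                  * ((real T - 1 - real T * alpha + alpha ^ T) / (1 - alpha)\<^sup>2)"
  shows "(L_test (f T) D T
           \<le> alpha ^ (T - 1) * L_train1 (f 1) (D 1)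
             + (\<Sum>t = 2..T. alpha ^ (T - t) / gam lam k t * L_train lam k D t (f t) (f (t - 1)))
             + \<eta>)
       \<and> (L_test (f T) D T
           \<ge> alpha ^ (T - 1) * L_train1 (f 1) (D 1)
             + (\<Sum>t = 2..T. alpha ^ (T - t) / gam' lam k t * L_train lam k D t (f t) (f (t - 1)))
             + \<eta>')"
proof -
  have "L_train1 (f 1) (D 1) = L_con (f 1) (D 1)" unfolding L_train1_def ..
  then show ?thesis
    using L_test_le_unrolled[where M = M and D = D and f = f and lam = lam and k = k, OF T2 tasks encs lam_pos k_pos]
      L_test_ge_unrolled[where M = M and D = D and f = f and lam = lam and k = k, OF T2 tasks encs]
    unfolding \<eta>_def \<eta>'_def by simp
qed

end
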